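(* Let $\mu$ be a probability measure on a measurable space $(E,\mathcal F)$ and let $(\mathcal E,\mathcal D(\mathcal E))$ be a non-conservative irreducible symmetric Dirichlet form on $L^2(\mu)$. Then there is $C>0$ such that $$\mu(f^2)\le C\,\mathcal E(f,f),\qquad f\in\mathcal D(\mathcal E),$$ if and only if there are $C_1,C_2>0$ such that $$\mu(f^2)\le C_1\,\mathcal E(f,f)+C_2\,\mu(|f|)^2,\qquad f\in\mathcal D(\mathcal E).$$
   Context: Non-conservative means either $1\notin\mathcal D(\mathcal E)$, or $1\in\mathcal D(\mathcal E)$ but $\mathcal E(1,1)>0$. In this setting, irreducible means that $f\in\mathcal D(\mathcal E)$ with $\mathcal E(f,f)=0$ implies $f=0$. *)

theory Defs
  imports "HOL-Probability.Probability"
begin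

text \<open>Elements of L^2(mu) are represented by Borel measurable, square integrable
  representatives; the domain of a form is required to be closed under
  a.e. modification, and the form is required to be insensitive to it.\<close>

definition sq_int :: "'a measure \<Rightarrow> ('a \<Rightarrow> real) \<Rightarrow> bool" where
  "sq_int M f \<longleftrightarrow> f \<in> borel_measurable M \<and> integrable M (\<lambda>x. (f x)\<^sup>2)"

definition E1 :: "'a measure \<Rightarrow> (('a \<Rightarrow> real) \<Rightarrow> ('a \<Rightarrow> real) \<Rightarrow> real) \<Rightarrow> ('a \<Rightarrow> real) \<Rightarrow> real" where
  "E1 M E g = E g g + (\<integral>x. (g x)\<^sup>2 \<partial>M)"

definition symmetric_dirichlet_form ::
  "'a measure \<Rightarrow> ('a \<Rightarrow> real) set \<Rightarrow> (('a \<Rightarrow> real) \<Rightarrow> ('a \<Rightarrow> real) \<Rightarrow> real) \<Rightarrow> bool" where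
  "symmetric_dirichlet_form M D E \<longleftrightarrow>
     \<comment> \<open>domain consists of L^2 elements, well defined on a.e.-classes\<close>
     (\<forall>f\<in>D. sq_int M f) \<and>
     (\<forall>f\<in>D. \<forall>g. g \<in> borel_measurable M \<and> (AE x in M. f x = g x) \<longrightarrow>
         g \<in> D \<and> (\<forall>h\<in>D. E g h = E f h)) \<and>
     \<comment> \<open>linear subspace\<close>
     (\<lambda>x. 0) \<in> D \<and>
     (\<forall>f\<in>D. \<forall>g\<in>D. (\<lambda>x. f x + g x) \<in> D) \<and>
     (\<forall>f\<in>D. \<forall>c. (\<lambda>x. c * f x) \<in> D) \<and>
     \<comment> \<open>dense in L^2\<close>
     (\<forall>f. sq_int M f \<longrightarrow> (\<forall>e>0. \<exists>g\<in>D. (\<integral>x. (f x - g x)\<^sup>2 \<partial>M) < e)) \<and>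
     \<comment> \<open>symmetric nonnegative definite bilinear form\<close>
     (\<forall>f\<in>D. \<forall>g\<in>D. \<forall>h\<in>D. E (\<lambda>x. f x + g x) h = E f h + E g h) \<and>
     (\<forall>f\<in>D. \<forall>h\<in>D. \<forall>c. E (\<lambda>x. c * f x) h = c * E f h) \<and>
     (\<forall>f\<in>D. \<forall>g\<in>D. E f g = E g f) \<and>
     (\<forall>f\<in>D. E f f \<ge> 0) \<and>
     \<comment> \<open>closed: D is complete w.r.t. the E_1 norm\<close>
     (\<forall>u::nat \<Rightarrow> 'a \<Rightarrow> real. (\<forall>n. u n \<in> D) \<and>
        (\<forall>e>0. \<exists>N. \<forall>m\<ge>N. \<forall>n\<ge>N. E1 M E (\<lambda>x. u m x - u n x) < e) \<longrightarrow>
        (\<exists>f\<in>D. (\<lambda>n. E1 M E (\<lambda>x. u n x - f x)) \<longlonglongrightarrow> 0)) \<and>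
     \<comment> \<open>Markov property (unit contraction)\<close>
     (\<forall>f\<in>D. (\<lambda>x. min 1 (max 0 (f x))) \<in> D \<and>
        E (\<lambda>x. min 1 (max 0 (f x))) (\<lambda>x. min 1 (max 0 (f x))) \<le> E f f)"

definition non_conservative ::
  "'a measure \<Rightarrow> ('a \<Rightarrow> real) set \<Rightarrow> (('a \<Rightarrow> real) \<Rightarrow> ('a \<Rightarrow> real) \<Rightarrow> real) \<Rightarrow> bool" where
  "non_conservative M D E \<longleftrightarrow> (\<lambda>x. 1) \<notin> D \<or> ((\<lambda>x. 1) \<in> D \<and> E (\<lambda>x. 1) (\<lambda>x. 1) > 0)"

definition irreducible_form ::
  "'a measure \<Rightarrow> ('a \<Rightarrow> real) set \<Rightarrow> (('a \<Rightarrow> real) \<Rightarrow> ('a \<Rightarrow> real) \<Rightarrow> real) \<Rightarrow> bool" where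
  "irreducible_form M D E \<longleftrightarrow> (\<forall>f\<in>D. E f f = 0 \<longrightarrow> (AE x in M. f x = 0))"

end

theory Submission
  imports Defs
begin

text \<open>If the Poincar\'e inequality fails, there are normalized \<open>g\<close> of arbitrarily small
  energy; the defective inequality bounds their mass \<open>\<integral>|g|\<close> from below, and the Markov
  property turns the positive or negative part of \<open>g\<close> into \<open>u\<close> with \<open>\<integral>u\<^sup>2 \<le> 1\<close>,
  \<open>\<integral>u \<ge> \<delta>\<close> and \<open>E(u,u) \<le> \<epsilon>\<close>, for every \<open>\<epsilon> > 0\<close>. These sets are convex and shrink as
  \<open>\<epsilon> \<down> 0\<close>, so near-minimizers of the \<open>L\<^sup>2\<close> norm over them form an \<open>E\<^sub>1\<close>-Cauchy sequence.
  By closedness its limit \<open>f\<close> has \<open>E(f,f) = 0\<close>, so \<open>f = 0\<close> by irreducibility, while the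
  masses stay \<open>\<ge> \<delta>\<close>.\<close>

lemma Cauchy_condition_of_le_min_bound:
  fixes F :: "nat \<Rightarrow> nat \<Rightarrow> real"
  assumes bound: "\<And>m n. F m n \<le> r (min m n)" and r: "r \<longlonglongrightarrow> 0"
  shows "\<forall>e>0. \<exists>N. \<forall>m\<ge>N. \<forall>n\<ge>N. F m n < e"
proof (intro allI impI)
  fix e :: real assume "e > 0"
  then obtain N where N: "\<And>k. k \<ge> N \<Longrightarrow> r k < e"
    using LIMSEQ_D[OF r] by force
  show "\<exists>N. \<forall>m\<ge>N. \<forall>n\<ge>N. F m n < e"
    using N bound by (intro exI[of _ N]) (smt (verit) min.bounded_iff)
qed

lemma (in prob_space) square_integral_le_integral_square:
  fixes f :: "'a \<Rightarrow> real"
  assumes "f \<in> borel_measurable M" and "integrable M (\<lambda>x. (f x)\<^sup>2)"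
  shows "(\<integral>x. f x \<partial>M)\<^sup>2 \<le> (\<integral>x. (f x)\<^sup>2 \<partial>M)"
proof -
  have "integrable M f" using assms by (rule square_integrable_imp_integrable)
  then have "variance f = (\<integral>x. (f x)\<^sup>2 \<partial>M) - (\<integral>x. f x \<partial>M)\<^sup>2"
    using assms(2) by (rule variance_eq)
  moreover have "0 \<le> variance f" by simp
  ultimately show ?thesis by simp
qed

locale dirichlet_form =
  fixes M :: "'a measure" and D :: "('a \<Rightarrow> real) set"
    and E :: "('a \<Rightarrow> real) \<Rightarrow> ('a \<Rightarrow> real) \<Rightarrow> real"
  assumes symmetric_dirichlet_form: "symmetric_dirichlet_form M D E"
begin

lemma sq_int_of_in_D: "f \<in> D \<Longrightarrow> sq_int M f"
  and add_in_D: "f \<in> D \<Longrightarrow> g \<in> D \<Longrightarrow> (\<lambda>x. f x + g x) \<in> D"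
  and scale_in_D: "f \<in> D \<Longrightarrow> (\<lambda>x. c * f x) \<in> D"
  and E_add_left: "f \<in> D \<Longrightarrow> g \<in> D \<Longrightarrow> h \<in> D \<Longrightarrow> E (\<lambda>x. f x + g x) h = E f h + E g h"
  and E_scale_left: "f \<in> D \<Longrightarrow> h \<in> D \<Longrightarrow> E (\<lambda>x. c * f x) h = c * E f h"
  and E_sym: "f \<in> D \<Longrightarrow> g \<in> D \<Longrightarrow> E f g = E g f"
  and E_nonneg: "f \<in> D \<Longrightarrow> 0 \<le> E f f"
  and unit_contraction_in_D: "f \<in> D \<Longrightarrow> (\<lambda>x. min 1 (max 0 (f x))) \<in> D"
  and E_unit_contraction_le: "f \<in> D \<Longrightarrow>
        E (\<lambda>x. min 1 (max 0 (f x))) (\<lambda>x. min 1 (max 0 (f x))) \<le> E f f"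
  using symmetric_dirichlet_form unfolding symmetric_dirichlet_form_def by simp_all

lemma E1_complete:
  assumes "\<And>n. u n \<in> D" and "\<forall>e>0. \<exists>N. \<forall>m\<ge>N. \<forall>n\<ge>N. E1 M E (\<lambda>x. u m x - u n x) < e"
  obtains f where "f \<in> D" "(\<lambda>n. E1 M E (\<lambda>x. u n x - f x)) \<longlonglongrightarrow> 0"
proof -
  have "\<forall>u. (\<forall>n. u n \<in> D) \<and> (\<forall>e>0. \<exists>N. \<forall>m\<ge>N. \<forall>n\<ge>N. E1 M E (\<lambda>x. u m x - u n x) < e) \<longrightarrow>
          (\<exists>f\<in>D. (\<lambda>n. E1 M E (\<lambda>x. u n x - f x)) \<longlonglongrightarrow> 0)"
    using symmetric_dirichlet_form unfolding symmetric_dirichlet_form_def by (elim conjE) assumption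
  then show thesis using assms that by blast
qed

lemma measurable_of_in_D: "f \<in> D \<Longrightarrow> f \<in> borel_measurable M"
  and integrable_square_of_in_D: "f \<in> D \<Longrightarrow> integrable M (\<lambda>x. (f x)\<^sup>2)"
  using sq_int_of_in_D unfolding sq_int_def by blast+

lemma lincomb_in_D: "a \<in> D \<Longrightarrow> b \<in> D \<Longrightarrow> (\<lambda>x. p * a x + q * b x) \<in> D"
  by (intro add_in_D scale_in_D)

lemma E_lincomb:
  assumes a: "a \<in> D" and b: "b \<in> D"
  shows "E (\<lambda>x. p * a x + q * b x) (\<lambda>x. p * a x + q * b x)
         = p\<^sup>2 * E a a + 2 * p * q * E a b + q\<^sup>2 * E b b"
proof -
  let ?S = "\<lambda>x. p * a x + q * b x"
  have S: "?S \<in> D" using a b by (rule lincomb_in_D)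
  have expand_left: "E ?S h = p * E a h + q * E b h" if h: "h \<in> D" for h
    using E_add_left[OF scale_in_D[OF a] scale_in_D[OF b] h] E_scale_left[OF a h] E_scale_left[OF b h]
    by simp
  have "E ?S ?S = p * E ?S a + q * E ?S b"
    using expand_left[OF S] E_sym[OF a S] E_sym[OF b S] by simp
  also have "\<dots> = p\<^sup>2 * E a a + 2 * p * q * E a b + q\<^sup>2 * E b b"
    using expand_left[OF a] expand_left[OF b] E_sym[OF a b]
    by (simp add: power2_eq_square algebra_simps)
  finally show ?thesis .
qed

lemma E_scale: "a \<in> D \<Longrightarrow> E (\<lambda>x. c * a x) (\<lambda>x. c * a x) = c\<^sup>2 * E a a"
  using E_lincomb[of a a c 0] by simp

lemma E_cross_le: "a \<in> D \<Longrightarrow> b \<in> D \<Longrightarrow> 2 * \<bar>E a b\<bar> \<le> E a a + E b b"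
  using E_lincomb[of a b 1 1] E_lincomb[of a b 1 "-1"]
    E_nonneg[OF lincomb_in_D[of a b 1 1]] E_nonneg[OF lincomb_in_D[of a b 1 "-1"]]
  by (simp add: abs_le_iff)

lemma
  assumes "a \<in> D" "b \<in> D"
  shows diff_in_D: "(\<lambda>x. a x - b x) \<in> D"
    and E_diff_le: "E (\<lambda>x. a x - b x) (\<lambda>x. a x - b x) \<le> 2 * E a a + 2 * E b b"
  using lincomb_in_D[OF assms, of 1 "-1"] E_lincomb[OF assms, of 1 "-1"] E_cross_le[OF assms]
  by simp_all

lemma E_midpoint_le:
  "a \<in> D \<Longrightarrow> b \<in> D \<Longrightarrow>
   E (\<lambda>x. (1/2) * a x + (1/2) * b x) (\<lambda>x. (1/2) * a x + (1/2) * b x) \<le> (E a a + E b b) / 2"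
  using E_lincomb[of a b "1/2" "1/2"] E_cross_le[of a b] by (simp add: power2_eq_square)

lemma integral_square_le_E1: "f \<in> D \<Longrightarrow> (\<integral>x. (f x)\<^sup>2 \<partial>M) \<le> E1 M E f"
  and E_le_E1: "E f f \<le> E1 M E f"
  using E_nonneg unfolding E1_def by auto

lemma exists_normalized_small_energy:
  assumes no_poincare: "\<not> (\<exists>C>0. \<forall>f\<in>D. (\<integral>x. (f x)\<^sup>2 \<partial>M) \<le> C * E f f)"
    and "\<epsilon> > 0"
  obtains g where "g \<in> D" "(\<integral>x. (g x)\<^sup>2 \<partial>M) = 1" "E g g \<le> \<epsilon>"
proof -
  have "1 / \<epsilon> > 0" using \<open>\<epsilon> > 0\<close> by simp
  then obtain f where f: "f \<in> D" and violates: "\<not> (\<integral>x. (f x)\<^sup>2 \<partial>M) \<le> 1 / \<epsilon> * E f f"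
    using no_poincare by blast
  define v where "v = (\<integral>x. (f x)\<^sup>2 \<partial>M)"
  have "0 \<le> 1 / \<epsilon> * E f f" using E_nonneg[OF f] \<open>\<epsilon> > 0\<close> by simp
  then have v: "v > 0" using violates unfolding v_def by linarith
  define g where "g = (\<lambda>x. (1 / sqrt v) * f x)"
  have g_normalized: "(\<integral>x. (g x)\<^sup>2 \<partial>M) = 1"
    using v unfolding g_def power_mult_distrib v_def by (simp add: power_divide)
  have "E g g = E f f / v"
    using v unfolding g_def E_scale[OF f] by (simp add: power_divide)
  also have "\<dots> \<le> \<epsilon>"
    using violates v \<open>\<epsilon> > 0\<close> unfolding v_def[symmetric] by (simp add: divide_simps mult.commute)
  finally show thesis using that g_normalized scale_in_D[OF f] unfolding g_def by blast
qed

lemma L2_tendsto_zero_of_E1_Cauchy: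
  assumes irreducible: "irreducible_form M D E"
    and h: "\<And>n. h n \<in> D"
    and Cauchy: "\<forall>e>0. \<exists>N. \<forall>m\<ge>N. \<forall>n\<ge>N. E1 M E (\<lambda>x. h m x - h n x) < e"
    and energy: "(\<lambda>n. E (h n) (h n)) \<longlonglongrightarrow> 0"
  shows "(\<lambda>n. \<integral>x. (h n x)\<^sup>2 \<partial>M) \<longlonglongrightarrow> 0"
proof -
  obtain f where f: "f \<in> D" and lim: "(\<lambda>n. E1 M E (\<lambda>x. h n x - f x)) \<longlonglongrightarrow> 0"
    using E1_complete[OF h Cauchy] .
  have "E f f \<le> 2 * E (h n) (h n) + 2 * E1 M E (\<lambda>x. h n x - f x)" for n
    using E_diff_le[OF h[of n] diff_in_D[OF h[of n] f]] E_le_E1[of "\<lambda>x. h n x - f x"] by simp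
  moreover have "(\<lambda>n. 2 * E (h n) (h n) + 2 * E1 M E (\<lambda>x. h n x - f x)) \<longlonglongrightarrow> 0"
    by (intro tendsto_add_zero tendsto_mult_right_zero energy lim)
  ultimately have "E f f \<le> 0"
    by (intro LIMSEQ_le_const[where a = "E f f"]) auto
  then have "AE x in M. f x = 0"
    using irreducible f E_nonneg[OF f] unfolding irreducible_form_def by auto
  then have "(\<integral>x. (h n x)\<^sup>2 \<partial>M) = (\<integral>x. (h n x - f x)\<^sup>2 \<partial>M)" for n
    by (intro integral_cong_AE) (use measurable_of_in_D[OF h[of n]] measurable_of_in_D[OF f] in auto)
  then have "(\<integral>x. (h n x)\<^sup>2 \<partial>M) \<le> E1 M E (\<lambda>x. h n x - f x)" for n
    using integral_square_le_E1[OF diff_in_D[OF h[of n] f]] by simp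
  then show ?thesis
    by (intro tendsto_sandwich[OF _ _ tendsto_const lim]) auto
qed

end

locale prob_dirichlet_form = prob_space M + dirichlet_form M D E
  for M :: "'a measure" and D E
begin

lemma integrable_of_in_D: "f \<in> D \<Longrightarrow> integrable M f"
  using square_integrable_imp_integrable measurable_of_in_D integrable_square_of_in_D by blast

lemma square_integral_le_of_in_D: "f \<in> D \<Longrightarrow> (\<integral>x. f x \<partial>M)\<^sup>2 \<le> (\<integral>x. (f x)\<^sup>2 \<partial>M)"
  using square_integral_le_integral_square measurable_of_in_D integrable_square_of_in_D by blast

lemma integral_square_parallelogram:
  assumes a: "a \<in> D" and b: "b \<in> D"
  shows "(\<integral>x. (a x - b x)\<^sup>2 \<partial>M)
    = 2 * (\<integral>x. (a x)\<^sup>2 \<partial>M) + 2 * (\<integral>x. (b x)\<^sup>2 \<partial>M)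
      - 4 * (\<integral>x. ((1/2) * a x + (1/2) * b x)\<^sup>2 \<partial>M)"
proof -
  have "(\<lambda>x. (a x - b x)\<^sup>2)
      = (\<lambda>x. 2 * (a x)\<^sup>2 + 2 * (b x)\<^sup>2 - 4 * ((1/2) * a x + (1/2) * b x)\<^sup>2)"
    by (simp add: power2_eq_square algebra_simps)
  then show ?thesis
    using integrable_square_of_in_D[OF a] integrable_square_of_in_D[OF b]
      integrable_square_of_in_D[OF lincomb_in_D[OF a b, of "1/2" "1/2"]]
    by simp
qed

definition small_energy_set :: "real \<Rightarrow> real \<Rightarrow> ('a \<Rightarrow> real) set" where
  "small_energy_set \<delta> \<epsilon> =
     {u \<in> D. E u u \<le> \<epsilon> \<and> \<delta> \<le> (\<integral>x. u x \<partial>M) \<and> (\<integral>x. (u x)\<^sup>2 \<partial>M) \<le> 1}"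

lemma small_energy_set_mono: "\<epsilon> \<le> \<epsilon>' \<Longrightarrow> small_energy_set \<delta> \<epsilon> \<subseteq> small_energy_set \<delta> \<epsilon>'"
  unfolding small_energy_set_def by auto

lemma midpoint_in_small_energy_set:
  assumes a: "a \<in> small_energy_set \<delta> \<epsilon>" and b: "b \<in> small_energy_set \<delta> \<epsilon>"
  shows "(\<lambda>x. (1/2) * a x + (1/2) * b x) \<in> small_energy_set \<delta> \<epsilon>"
proof -
  have aD: "a \<in> D" and bD: "b \<in> D" using a b unfolding small_energy_set_def by auto
  have "E (\<lambda>x. (1/2) * a x + (1/2) * b x) (\<lambda>x. (1/2) * a x + (1/2) * b x) \<le> \<epsilon>"
    using E_midpoint_le[OF aD bD] a b unfolding small_energy_set_def by auto
  moreover have "\<delta> \<le> (\<integral>x. (1/2) * a x + (1/2) * b x \<partial>M)"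
    using integrable_of_in_D[OF aD] integrable_of_in_D[OF bD] a b
    unfolding small_energy_set_def by auto
  moreover have "(\<integral>x. ((1/2) * a x + (1/2) * b x)\<^sup>2 \<partial>M) \<le> 1"
    using integral_square_parallelogram[OF aD bD] a b
      Bochner_Integration.integral_nonneg[of M "\<lambda>x. (a x - b x)\<^sup>2"]
    unfolding small_energy_set_def by auto
  ultimately show ?thesis
    using lincomb_in_D[OF aD bD] unfolding small_energy_set_def by blast
qed

text \<open>Near-minimizers of the \<open>L\<^sup>2\<close> norm on a convex set are close: by the parallelogram law,
  their midpoint would otherwise fall below the infimum.\<close>

lemma E1_diff_le_of_near_minimal:
  assumes a: "a \<in> small_energy_set \<delta> \<epsilon>" and b: "b \<in> small_energy_set \<delta> \<epsilon>"
    and lower: "\<And>u. u \<in> small_energy_set \<delta> \<epsilon> \<Longrightarrow> c \<le> (\<integral>x. (u x)\<^sup>2 \<partial>M)"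
    and near_a: "(\<integral>x. (a x)\<^sup>2 \<partial>M) \<le> c + \<eta>" and near_b: "(\<integral>x. (b x)\<^sup>2 \<partial>M) \<le> c + \<eta>"
  shows "E1 M E (\<lambda>x. a x - b x) \<le> 4 * \<eta> + 4 * \<epsilon>"
proof -
  have aD: "a \<in> D" and bD: "b \<in> D" using a b unfolding small_energy_set_def by auto
  have "c \<le> (\<integral>x. ((1/2) * a x + (1/2) * b x)\<^sup>2 \<partial>M)"
    using lower midpoint_in_small_energy_set[OF a b] .
  then have "(\<integral>x. (a x - b x)\<^sup>2 \<partial>M) \<le> 4 * \<eta>"
    using integral_square_parallelogram[OF aD bD] near_a near_b by simp
  moreover have "E (\<lambda>x. a x - b x) (\<lambda>x. a x - b x) \<le> 4 * \<epsilon>"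
    using E_diff_le[OF aD bD] a b unfolding small_energy_set_def by auto
  ultimately show ?thesis unfolding E1_def by simp
qed

lemma truncation_in_small_energy_set:
  assumes g: "g \<in> D" and a: "a > 0"
    and positive_part: "a \<le> (\<integral>x. max 0 (g x) \<partial>M)" and g_sq: "(\<integral>x. (g x)\<^sup>2 \<partial>M) \<le> 1"
  shows "(\<lambda>x. min 1 (max 0 ((a/2) * g x))) \<in> small_energy_set (a\<^sup>2/4) ((a/2)\<^sup>2 * E g g)"
proof -
  define s where "s = a/2"
  define u where "u = (\<lambda>x. min 1 (max 0 (s * g x)))"
  have s: "s > 0" using a unfolding s_def by simp
  have uD: "u \<in> D" unfolding u_def by (intro unit_contraction_in_D scale_in_D g)
  have "E u u \<le> s\<^sup>2 * E g g"
    using E_unit_contraction_le[OF scale_in_D[OF g]] E_scale[OF g] unfolding u_def by simp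
  \<comment> \<open>\<open>min 1 (max 0 y) \<ge> max 0 y - y\<^sup>2\<close> turns the positive part of \<open>g\<close> into mass of \<open>u\<close>\<close>
  have pointwise: "s * max 0 (g x) - s\<^sup>2 * (g x)\<^sup>2 \<le> u x" for x
  proof -
    have "max 0 y - y\<^sup>2 \<le> min 1 (max 0 y)" for y :: real
    proof (cases "y \<le> 1")
      case False
      then have "y \<le> y\<^sup>2" by (simp add: power2_eq_square)
      then show ?thesis using False by (simp add: max_def min_def)
    qed (auto simp: max_def min_def)
    then have "max 0 (s * g x) - (s * g x)\<^sup>2 \<le> u x" unfolding u_def .
    then show ?thesis using s by (simp add: max_mult_distrib_left power_mult_distrib)
  qed
  have g_pos_int: "integrable M (\<lambda>x. max 0 (g x))"
    using integrable_max[OF integrable_zero integrable_of_in_D[OF g]] by simp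
  have "a\<^sup>2/4 \<le> s * (\<integral>x. max 0 (g x) \<partial>M) - s\<^sup>2 * (\<integral>x. (g x)\<^sup>2 \<partial>M)"
  proof -
    have "s * a - s\<^sup>2 * 1 \<le> s * (\<integral>x. max 0 (g x) \<partial>M) - s\<^sup>2 * (\<integral>x. (g x)\<^sup>2 \<partial>M)"
      using positive_part g_sq s by (intro diff_mono mult_left_mono) auto
    then show ?thesis unfolding s_def by (simp add: power2_eq_square)
  qed
  also have "\<dots> = (\<integral>x. s * max 0 (g x) - s\<^sup>2 * (g x)\<^sup>2 \<partial>M)"
    using g_pos_int integrable_square_of_in_D[OF g] by simp
  also have "\<dots> \<le> (\<integral>x. u x \<partial>M)"
    using g_pos_int integrable_square_of_in_D[OF g] integrable_of_in_D[OF uD] pointwise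
    by (intro integral_mono) auto
  finally have "a\<^sup>2/4 \<le> (\<integral>x. u x \<partial>M)" .
  moreover have "(\<integral>x. (u x)\<^sup>2 \<partial>M) \<le> 1"
  proof -
    have "(\<integral>x. (u x)\<^sup>2 \<partial>M) \<le> (\<integral>x. 1 \<partial>M)"
      using integrable_square_of_in_D[OF uD]
      by (intro integral_mono) (auto simp: u_def abs_square_le_1)
    then show ?thesis by (simp add: prob_space)
  qed
  ultimately show ?thesis
    using uD \<open>E u u \<le> s\<^sup>2 * E g g\<close> unfolding small_energy_set_def u_def s_def by blast
qed

lemma exists_large_positive_part:
  assumes g: "g \<in> D" and mass: "2 * a \<le> (\<integral>x. \<bar>g x\<bar> \<partial>M)"
  obtains h where "h \<in> D" "E h h = E g g" "(\<integral>x. (h x)\<^sup>2 \<partial>M) = (\<integral>x. (g x)\<^sup>2 \<partial>M)"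
    "a \<le> (\<integral>x. max 0 (h x) \<partial>M)"
proof -
  let ?neg = "\<lambda>x. (-1) * g x"
  have "(\<integral>x. \<bar>g x\<bar> \<partial>M) = (\<integral>x. max 0 (g x) \<partial>M) + (\<integral>x. max 0 (?neg x) \<partial>M)"
  proof -
    have "(\<lambda>x. \<bar>g x\<bar>) = (\<lambda>x. max 0 (g x) + max 0 (?neg x))" by (auto simp: max_def)
    then show ?thesis
      using integrable_max[OF integrable_zero integrable_of_in_D[OF g]]
        integrable_max[OF integrable_zero integrable_of_in_D[OF scale_in_D[OF g, of "-1"]]]
      by simp
  qed
  then consider "a \<le> (\<integral>x. max 0 (g x) \<partial>M)" | "a \<le> (\<integral>x. max 0 (?neg x) \<partial>M)"
    using mass by linarith
  then show thesis
  proof cases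
    case 1
    then show thesis using that g by blast
  next
    case 2
    show thesis
    proof (rule that[of ?neg])
      show "?neg \<in> D" using scale_in_D[OF g] .
      show "E ?neg ?neg = E g g" using E_scale[OF g, of "-1"] by simp
    qed (use 2 in simp_all)
  qed
qed

lemma small_energy_sets_nonempty:
  assumes C1: "C1 > 0" and C2: "C2 > 0"
    and defective: "\<forall>f\<in>D. (\<integral>x. (f x)\<^sup>2 \<partial>M) \<le> C1 * E f f + C2 * (\<integral>x. \<bar>f x\<bar> \<partial>M)\<^sup>2"
    and no_poincare: "\<not> (\<exists>C>0. \<forall>f\<in>D. (\<integral>x. (f x)\<^sup>2 \<partial>M) \<le> C * E f f)"
  obtains \<delta> where "\<delta> > 0" "\<And>\<epsilon>. \<epsilon> > 0 \<Longrightarrow> small_energy_set \<delta> \<epsilon> \<noteq> {}"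
proof -
  define a where "a = sqrt (1 / (2 * C2)) / 2"
  have a: "a > 0" using C2 unfolding a_def by simp
  have "small_energy_set (a\<^sup>2/4) \<epsilon> \<noteq> {}" if \<epsilon>: "\<epsilon> > 0" for \<epsilon>
  proof -
    define \<eta> where "\<eta> = min (1 / (2 * C1)) (\<epsilon> / (a/2)\<^sup>2)"
    have \<eta>: "\<eta> > 0" using C1 a \<epsilon> unfolding \<eta>_def by simp
    obtain g where g: "g \<in> D" and g_sq: "(\<integral>x. (g x)\<^sup>2 \<partial>M) = 1" and Eg: "E g g \<le> \<eta>"
      using exists_normalized_small_energy[OF no_poincare \<eta>] .
    have Eg_C1: "E g g \<le> 1 / (2 * C1)" and Eg_\<epsilon>: "E g g \<le> \<epsilon> / (a/2)\<^sup>2"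
      using Eg unfolding \<eta>_def by simp_all
    have "1 \<le> C1 * E g g + C2 * (\<integral>x. \<bar>g x\<bar> \<partial>M)\<^sup>2"
      using bspec[OF defective g] g_sq by simp
    moreover have "C1 * E g g \<le> 1/2"
      using Eg_C1 C1 by (simp add: field_simps)
    ultimately have "1 / (2 * C2) \<le> (\<integral>x. \<bar>g x\<bar> \<partial>M)\<^sup>2"
      using C2 by (simp add: field_simps)
    then have "(2 * a)\<^sup>2 \<le> (\<integral>x. \<bar>g x\<bar> \<partial>M)\<^sup>2"
      using C2 unfolding a_def by (simp add: power_mult_distrib)
    then have "2 * a \<le> (\<integral>x. \<bar>g x\<bar> \<partial>M)"
      by (rule power2_le_imp_le) simp
    then obtain h where h: "h \<in> D" "E h h = E g g" "(\<integral>x. (h x)\<^sup>2 \<partial>M) = (\<integral>x. (g x)\<^sup>2 \<partial>M)"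
      and h_pos: "a \<le> (\<integral>x. max 0 (h x) \<partial>M)"
      by (rule exists_large_positive_part[OF g])
    have "(a/2)\<^sup>2 * E h h \<le> \<epsilon>"
      using Eg_\<epsilon> h(2) a by (simp add: field_simps)
    moreover have "(\<lambda>x. min 1 (max 0 ((a/2) * h x))) \<in> small_energy_set (a\<^sup>2/4) ((a/2)\<^sup>2 * E h h)"
      using truncation_in_small_energy_set[OF h(1) a h_pos] h(3) g_sq by simp
    ultimately show ?thesis
      using small_energy_set_mono by blast
  qed
  then show thesis using a by (intro that[of "a\<^sup>2/4"]) auto
qed

lemma E1_Cauchy_sequence_in_small_energy_sets:
  assumes nonempty: "\<And>n. small_energy_set \<delta> (1 / real (Suc n)) \<noteq> {}"
  obtains h where "\<And>n. h n \<in> small_energy_set \<delta> (1 / real (Suc n))"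
    and "\<forall>e>0. \<exists>N. \<forall>m\<ge>N. \<forall>n\<ge>N. E1 M E (\<lambda>x. h m x - h n x) < e"
proof -
  let ?K = "\<lambda>n. small_energy_set \<delta> (1 / real (Suc n))"
  define Q :: "('a \<Rightarrow> real) \<Rightarrow> real" where "Q u = (\<integral>x. (u x)\<^sup>2 \<partial>M)" for u
  define d where "d n = Inf (Q ` ?K n)" for n
  have K_antimono: "?K m \<subseteq> ?K n" if "n \<le> m" for m n
    using that by (intro small_energy_set_mono) (simp add: frac_le)
  have bdd: "bdd_below (Q ` ?K n)" for n
    unfolding Q_def by (intro bdd_belowI[of _ 0]) auto
  have d_le: "d n \<le> Q u" if "u \<in> ?K n" for n u
    unfolding d_def using bdd that by (simp add: cInf_lower)
  have d_le_1: "d n \<le> 1" for n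
  proof -
    obtain u where "u \<in> ?K n" using nonempty[of n] by blast
    then show ?thesis using d_le[of u n] unfolding small_energy_set_def Q_def by simp
  qed
  have "d n \<le> d m" if "n \<le> m" for n m
    unfolding d_def using nonempty[of m] bdd[of n] K_antimono[OF that]
    by (intro cInf_superset_mono) auto
  then have "incseq d" by (simp add: incseq_def)
  define d_lim where "d_lim = (SUP n. d n)"
  have d_lim: "d \<longlonglongrightarrow> d_lim"
    unfolding d_lim_def using \<open>incseq d\<close> d_le_1 by (intro LIMSEQ_incseq_SUP bdd_aboveI2) auto
  have d_le_lim: "d n \<le> d_lim" for n
    using incseq_le[OF \<open>incseq d\<close> d_lim] .
  have "\<exists>u. u \<in> ?K n \<and> Q u < d n + 1 / real (Suc n)" for n
    using cInf_lessD[of "Q ` ?K n" "d n + 1 / real (Suc n)"] nonempty[of n]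
    unfolding d_def by auto
  then obtain h where "\<forall>n. h n \<in> ?K n \<and> Q (h n) < d n + 1 / real (Suc n)"
    by (metis choice)
  then have hK: "\<And>n. h n \<in> ?K n" and hQ: "\<And>n. Q (h n) < d n + 1 / real (Suc n)"
    by blast+
  have bound: "E1 M E (\<lambda>x. h m x - h n x) \<le> 4 * (d_lim - d (min m n)) + 8 / real (Suc (min m n))"
    for m n
  proof -
    define k where "k = min m n"
    have inK: "h i \<in> ?K k" if "i \<in> {m, n}" for i
      using hK[of i] K_antimono[of k i] that unfolding k_def by auto
    have "Q (h i) \<le> d k + (d_lim - d k + 1 / real (Suc k))" if "i \<in> {m, n}" for i
    proof -
      have "1 / real (Suc i) \<le> 1 / real (Suc k)" using that unfolding k_def by (auto simp: frac_le)
      then show ?thesis using hQ[of i] d_le_lim[of i] by linarith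
    qed
    then have "E1 M E (\<lambda>x. h m x - h n x) \<le> 4 * (d_lim - d k + 1 / real (Suc k)) + 4 * (1 / real (Suc k))"
      using inK d_le unfolding Q_def by (intro E1_diff_le_of_near_minimal) auto
    then show ?thesis unfolding k_def by simp
  qed
  have "(\<lambda>k. 4 * (d_lim - d k) + 8 / real (Suc k)) \<longlonglongrightarrow> 4 * (d_lim - d_lim) + 0"
    using d_lim by (intro tendsto_intros LIMSEQ_Suc[OF lim_const_over_n])
  then have "(\<lambda>k. 4 * (d_lim - d k) + 8 / real (Suc k)) \<longlonglongrightarrow> 0" by simp
  from Cauchy_condition_of_le_min_bound[OF bound this] show thesis
    using that hK by blast
qed

lemma small_energy_sets_eventually_empty:
  assumes irreducible: "irreducible_form M D E" and "\<delta> > 0"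
  shows "\<exists>\<epsilon>>0. small_energy_set \<delta> \<epsilon> = {}"
proof (rule ccontr)
  assume "\<not> (\<exists>\<epsilon>>0. small_energy_set \<delta> \<epsilon> = {})"
  then have "\<And>n. small_energy_set \<delta> (1 / real (Suc n)) \<noteq> {}" by simp
  then obtain h where hK: "\<And>n. h n \<in> small_energy_set \<delta> (1 / real (Suc n))"
    and Cauchy: "\<forall>e>0. \<exists>N. \<forall>m\<ge>N. \<forall>n\<ge>N. E1 M E (\<lambda>x. h m x - h n x) < e"
    by (erule E1_Cauchy_sequence_in_small_energy_sets)
  have hD: "h n \<in> D" for n using hK[of n] unfolding small_energy_set_def by blast
  have "(\<lambda>n. E (h n) (h n)) \<longlonglongrightarrow> 0"
    using hK E_nonneg[OF hD] unfolding small_energy_set_def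
    by (intro tendsto_sandwich[OF _ _ tendsto_const LIMSEQ_Suc[OF lim_1_over_n]]) auto
  then have L2: "(\<lambda>n. \<integral>x. (h n x)\<^sup>2 \<partial>M) \<longlonglongrightarrow> 0"
    using L2_tendsto_zero_of_E1_Cauchy[OF irreducible hD Cauchy] by blast
  have "\<delta>\<^sup>2 \<le> (\<integral>x. (h n x)\<^sup>2 \<partial>M)" for n
  proof -
    have "\<delta>\<^sup>2 \<le> (\<integral>x. h n x \<partial>M)\<^sup>2"
      using hK[of n] \<open>\<delta> > 0\<close> unfolding small_energy_set_def by (intro power_mono) auto
    then show ?thesis using square_integral_le_of_in_D[OF hD[of n]] by linarith
  qed
  then have "\<delta>\<^sup>2 \<le> 0" by (intro LIMSEQ_le_const[OF L2]) auto
  then show False using \<open>\<delta> > 0\<close> by simp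
qed

end


theorem theorem4p1:
  fixes M :: "'a measure" and D :: "('a \<Rightarrow> real) set"
    and E :: "('a \<Rightarrow> real) \<Rightarrow> ('a \<Rightarrow> real) \<Rightarrow> real"
  assumes "prob_space M"
    and "symmetric_dirichlet_form M D E"
    and "non_conservative M D E"
    and "irreducible_form M D E"
  shows "(\<exists>C>0. \<forall>f\<in>D. (\<integral>x. (f x)\<^sup>2 \<partial>M) \<le> C * E f f) \<longleftrightarrow>
         (\<exists>C1>0. \<exists>C2>0. \<forall>f\<in>D.
            (\<integral>x. (f x)\<^sup>2 \<partial>M) \<le> C1 * E f f + C2 * (\<integral>x. \<bar>f x\<bar> \<partial>M)\<^sup>2)"
proof
  assume "\<exists>C>0. \<forall>f\<in>D. (\<integral>x. (f x)\<^sup>2 \<partial>M) \<le> C * E f f"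
  then obtain C where "C > 0" "\<forall>f\<in>D. (\<integral>x. (f x)\<^sup>2 \<partial>M) \<le> C * E f f" by blast
  then show "\<exists>C1>0. \<exists>C2>0. \<forall>f\<in>D.
      (\<integral>x. (f x)\<^sup>2 \<partial>M) \<le> C1 * E f f + C2 * (\<integral>x. \<bar>f x\<bar> \<partial>M)\<^sup>2"
    by (intro exI[of _ C] conjI exI[of _ 1]) (auto intro: add_increasing2)
next
  assume "\<exists>C1>0. \<exists>C2>0. \<forall>f\<in>D.
      (\<integral>x. (f x)\<^sup>2 \<partial>M) \<le> C1 * E f f + C2 * (\<integral>x. \<bar>f x\<bar> \<partial>M)\<^sup>2"
  then obtain C1 C2 where "C1 > 0" "C2 > 0"
    and defective: "\<forall>f\<in>D. (\<integral>x. (f x)\<^sup>2 \<partial>M) \<le> C1 * E f f + C2 * (\<integral>x. \<bar>f x\<bar> \<partial>M)\<^sup>2"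
    by blast
  interpret prob_dirichlet_form M D E
    using assms(1,2) unfolding prob_dirichlet_form_def dirichlet_form_def by blast
  show "\<exists>C>0. \<forall>f\<in>D. (\<integral>x. (f x)\<^sup>2 \<partial>M) \<le> C * E f f"
  proof (rule ccontr)
    assume "\<not> (\<exists>C>0. \<forall>f\<in>D. (\<integral>x. (f x)\<^sup>2 \<partial>M) \<le> C * E f f)"
    then obtain \<delta> where "\<delta> > 0" and nonempty: "\<And>\<epsilon>. \<epsilon> > 0 \<Longrightarrow> small_energy_set \<delta> \<epsilon> \<noteq> {}"
      using small_energy_sets_nonempty[OF \<open>C1 > 0\<close> \<open>C2 > 0\<close> defective] by blast
    then show False
      using small_energy_sets_eventually_empty[OF assms(4)] by blast
  qed
qed

end
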